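(* Let $m\ge 1$, $1\le B_1\le m$, $B_2\ge 1$, and for $i\in[m]$ let $g_i:\mathbb{R}^d\to\mathbb{R}^p$ be $C_g$-Lipschitz and accessed through a stochastic oracle $g_i(\cdot;\xi)$ satisfying, for all $\mathbf{x},\mathbf{y}$ and each fresh oracle sample $\xi$: $\mathbb{E}[g_i(\mathbf{x};\xi)]=g_i(\mathbf{x})$, $\mathbb{E}\|g_i(\mathbf{x};\xi)-g_i(\mathbf{x})\|^2\le\sigma^2/B_2$, $\mathbb{E}\|g_i(\mathbf{x};\xi)-g_i(\mathbf{y};\xi)\|^2\le C_g^2\|\mathbf{x}-\mathbf{y}\|^2$. Let $(\mathbf{w}_t)$ be a sequence in $\mathbb{R}^d$ with $\mathbf{w}_{t+1},\mathbf{w}_t$ determined before iteration $t+1$. At iteration $t+1$ a subset $\mathcal{B}_1^{t+1}\subseteq[m]$ of size $B_1$ is drawn uniformly at random and for $i\in\mathcal{B}_1^{t+1}$ a fresh sample $\xi_{t+1}^i$ is drawn, independently of the past, and $$\mathbf{u}_{t+1}^i=\begin{cases}(1-\beta_{t+1})\mathbf{u}_{t}^i+\beta_{t+1} g_i(\mathbf{w}_{t+1};\xi_{t+1}^i)+\gamma_{t+1}\big(g_i(\mathbf{w}_{t+1};\xi_{t+1}^i)-g_i(\mathbf{w}_{t};\xi_{t+1}^i)\big), & i\in\mathcal{B}_1^{t+1},\\ \mathbf{u}_{t}^i, & \text{otherwise},\end{cases}$$ with $\gamma_{t+1}=\frac{m-B_1}{B_1(1-\beta_{t+1})}+(1-\beta_{t+1})$.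 If $\beta_{t+1}\le\frac12$, then $$\mathbb{E}\|\mathbf{u}_{t+1}-\mathbf{u}_t\|^2\le\frac{2B_1\beta_{t+1}^2\sigma^2}{B_2}+\frac{4B_1\beta_{t+1}^2}{m}\mathbb{E}\|\mathbf{u}_t-g(\mathbf{w}_t)\|^2+\frac{9m^2C_g^2}{B_1}\mathbb{E}\|\mathbf{w}_{t+1}-\mathbf{w}_t\|^2,$$ where $\|\mathbf{u}_{t+1}-\mathbf{u}_t\|^2=\sum_i\|\mathbf{u}_{t+1}^i-\mathbf{u}_t^i\|^2$ and $\|\mathbf{u}_t-g(\mathbf{w}_t)\|^2=\sum_i\|\mathbf{u}_t^i-g_i(\mathbf{w}_t)\|^2$.
   Context: $\mathbf{u}_t=(\mathbf{u}_t^1,\dots,\mathbf{u}_t^m)$ with $\mathbf{u}_t^i\in\mathbb{R}^p$; $g(\mathbf{w})=(g_1(\mathbf{w}),\dots,g_m(\mathbf{w}))$. *)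

theory Defs
  imports "HOL-Probability.Probability"
begin

definition gamma_par :: "nat \<Rightarrow> nat \<Rightarrow> real \<Rightarrow> real" where
  "gamma_par m B1 \<beta> = (real m - real B1) / (real B1 * (1 - \<beta>)) + (1 - \<beta>)"

definition u_next ::
  "nat \<Rightarrow> nat \<Rightarrow> real \<Rightarrow> (nat \<Rightarrow> 'd \<Rightarrow> 's \<Rightarrow> 'p::real_vector)
   \<Rightarrow> nat set \<Rightarrow> (nat \<Rightarrow> 's) \<Rightarrow> 'd \<Rightarrow> 'd \<Rightarrow> (nat \<Rightarrow> 'p) \<Rightarrow> nat \<Rightarrow> 'p" where
  "u_next m B1 \<beta> G S \<xi> w0 w1 u i =
     (if i \<in> S then
        (1 - \<beta>) *\<^sub>R u i + \<beta> *\<^sub>R G i w1 (\<xi> i)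
        + gamma_par m B1 \<beta> *\<^sub>R (G i w1 (\<xi> i) - G i w0 (\<xi> i))
      else u i)"

definition unif_subsets :: "nat \<Rightarrow> nat \<Rightarrow> nat set pmf" where
  "unif_subsets m B1 = pmf_of_set {S. S \<subseteq> {..<m} \<and> card S = B1}"

end

theory Submission
  imports Defs
begin

text \<open>Block i moves only if it is sampled, which happens with probability B1/m independently
  of the fresh oracle sample, so the expected squared step is B1/m times the sum over i of the
  second moment of a forced update of block i. Writing w, w' for the old and new iterates, that
  update is \<beta> (G(w;\<xi>) - u) + (\<beta> + \<gamma>) (G(w';\<xi>) - G(w;\<xi>)). After (a + b)^2 \<le> 2a^2 + 2b^2, unbiasedness
  turns the second moment of the first part into bias plus variance,
  ||u - g(w)||^2 + \<sigma>^2/B2, and the mean-square Lipschitz bound controls the second part. Finally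
  \<beta> \<le> 1/2 gives \<beta> + \<gamma> \<le> 2m/B1, so 2 B1 (\<beta> + \<gamma>)^2 \<le> 8 m^2/B1. The argument even gives the
  constant 2 instead of 4 in front of the tracking error.\<close>

lemma power2_norm_add_le:
  fixes a b :: "'a::real_normed_vector"
  shows "(norm (a + b))\<^sup>2 \<le> 2 * (norm a)\<^sup>2 + 2 * (norm b)\<^sup>2"
proof -
  have "(norm (a + b))\<^sup>2 \<le> (norm a + norm b)\<^sup>2"
    by (simp add: norm_triangle_ineq power_mono)
  also have "\<dots> \<le> 2 * (norm a)\<^sup>2 + 2 * (norm b)\<^sup>2"
    using sum_squares_bound[of "norm a" "norm b"] by (simp add: power2_sum)
  finally show ?thesis .
qed

lemma (in prob_space) nn_integral_power2_norm_diff_eq: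
  fixes X :: "'a \<Rightarrow> 'b::{real_inner, banach, second_countable_topology}"
  assumes X: "integrable M X" and mean: "expectation X = \<mu>"
    and var_finite: "(\<integral>\<^sup>+x. ennreal ((norm (X x - \<mu>))\<^sup>2) \<partial>M) < \<infinity>"
  shows "(\<integral>\<^sup>+x. ennreal ((norm (X x - u))\<^sup>2) \<partial>M)
    = (\<integral>\<^sup>+x. ennreal ((norm (X x - \<mu>))\<^sup>2) \<partial>M) + ennreal ((norm (u - \<mu>))\<^sup>2)"
proof -
  have [measurable]: "X \<in> borel_measurable M"
    using X by (rule borel_measurable_integrable)
  have var: "integrable M (\<lambda>x. (norm (X x - \<mu>))\<^sup>2)"
    by (rule integrableI_bounded) (use var_finite in auto)
  have split: "(norm (X x - u))\<^sup>2 = (norm (X x - \<mu>))\<^sup>2 + (norm (u - \<mu>))\<^sup>2 - 2 * ((X x - \<mu>) \<bullet> (u - \<mu>))"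
    for x
  proof -
    have "X x - u = (X x - \<mu>) - (u - \<mu>)" by simp
    then show ?thesis
      by (simp only: power2_norm_eq_inner inner_diff_left inner_diff_right inner_commute)
        (simp add: algebra_simps inner_commute)
  qed
  have cross: "integrable M (\<lambda>x. (X x - \<mu>) \<bullet> (u - \<mu>))" "(\<integral>x. (X x - \<mu>) \<bullet> (u - \<mu>) \<partial>M) = 0"
    using X mean by (auto simp: prob_space)
  have "integrable M (\<lambda>x. (norm (X x - u))\<^sup>2)"
    unfolding split using var cross by auto
  then have "(\<integral>\<^sup>+x. ennreal ((norm (X x - u))\<^sup>2) \<partial>M) = ennreal (\<integral>x. (norm (X x - u))\<^sup>2 \<partial>M)"
    by (intro nn_integral_eq_integral) auto
  also have "(\<integral>x. (norm (X x - u))\<^sup>2 \<partial>M) = (\<integral>x. (norm (X x - \<mu>))\<^sup>2 \<partial>M) + (norm (u - \<mu>))\<^sup>2"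
    unfolding split using var cross by (simp add: prob_space)
  also have "ennreal \<dots> = (\<integral>\<^sup>+x. ennreal ((norm (X x - \<mu>))\<^sup>2) \<partial>M) + ennreal ((norm (u - \<mu>))\<^sup>2)"
    using var by (simp add: nn_integral_eq_integral integral_nonneg_AE)
  finally show ?thesis .
qed

lemma (in prob_space) nn_integral_momentum_step_le:
  fixes X0 X1 :: "'a \<Rightarrow> 'b::{real_inner, banach, second_countable_topology}"
  assumes X0: "integrable M X0" and mean: "expectation X0 = \<mu>"
    and [measurable]: "X1 \<in> borel_measurable M"
    and var: "(\<integral>\<^sup>+x. ennreal ((norm (X0 x - \<mu>))\<^sup>2) \<partial>M) \<le> ennreal V"
    and lip: "(\<integral>\<^sup>+x. ennreal ((norm (X1 x - X0 x))\<^sup>2) \<partial>M) \<le> ennreal L"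
    and "0 \<le> V" "0 \<le> L"
  shows "(\<integral>\<^sup>+x. ennreal ((norm ((1 - \<beta>) *\<^sub>R u + \<beta> *\<^sub>R X1 x + \<gamma> *\<^sub>R (X1 x - X0 x) - u))\<^sup>2) \<partial>M)
    \<le> ennreal (2 * \<beta>\<^sup>2 * ((norm (u - \<mu>))\<^sup>2 + V) + 2 * (\<beta> + \<gamma>)\<^sup>2 * L)"
proof -
  have [measurable]: "X0 \<in> borel_measurable M"
    using X0 by (rule borel_measurable_integrable)
  have pointwise: "ennreal ((norm ((1 - \<beta>) *\<^sub>R u + \<beta> *\<^sub>R X1 x + \<gamma> *\<^sub>R (X1 x - X0 x) - u))\<^sup>2)
      \<le> ennreal (2 * \<beta>\<^sup>2) * ennreal ((norm (X0 x - u))\<^sup>2)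
        + ennreal (2 * (\<beta> + \<gamma>)\<^sup>2) * ennreal ((norm (X1 x - X0 x))\<^sup>2)" for x
  proof -
    have "(1 - \<beta>) *\<^sub>R u + \<beta> *\<^sub>R X1 x + \<gamma> *\<^sub>R (X1 x - X0 x) - u
        = \<beta> *\<^sub>R (X0 x - u) + (\<beta> + \<gamma>) *\<^sub>R (X1 x - X0 x)"
      by (simp add: algebra_simps)
    then have "(norm ((1 - \<beta>) *\<^sub>R u + \<beta> *\<^sub>R X1 x + \<gamma> *\<^sub>R (X1 x - X0 x) - u))\<^sup>2
        \<le> 2 * \<beta>\<^sup>2 * (norm (X0 x - u))\<^sup>2 + 2 * (\<beta> + \<gamma>)\<^sup>2 * (norm (X1 x - X0 x))\<^sup>2"
      using power2_norm_add_le[of "\<beta> *\<^sub>R (X0 x - u)" "(\<beta> + \<gamma>) *\<^sub>R (X1 x - X0 x)"]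
      by (simp add: power_mult_distrib)
    then show ?thesis
      by (simp add: ennreal_mult'[symmetric] ennreal_plus[symmetric] del: ennreal_plus)
  qed
  have bias_variance: "(\<integral>\<^sup>+x. ennreal ((norm (X0 x - u))\<^sup>2) \<partial>M) \<le> ennreal ((norm (u - \<mu>))\<^sup>2 + V)"
  proof -
    have "(\<integral>\<^sup>+x. ennreal ((norm (X0 x - u))\<^sup>2) \<partial>M)
        = (\<integral>\<^sup>+x. ennreal ((norm (X0 x - \<mu>))\<^sup>2) \<partial>M) + ennreal ((norm (u - \<mu>))\<^sup>2)"
      using var by (intro nn_integral_power2_norm_diff_eq X0 mean) (simp add: le_less_trans)
    also have "\<dots> \<le> ennreal ((norm (u - \<mu>))\<^sup>2 + V)"
      using var \<open>0 \<le> V\<close> by (simp add: add.commute add_right_mono)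
    finally show ?thesis .
  qed
  have "(\<integral>\<^sup>+x. ennreal ((norm ((1 - \<beta>) *\<^sub>R u + \<beta> *\<^sub>R X1 x + \<gamma> *\<^sub>R (X1 x - X0 x) - u))\<^sup>2) \<partial>M)
      \<le> (\<integral>\<^sup>+x. ennreal (2 * \<beta>\<^sup>2) * ennreal ((norm (X0 x - u))\<^sup>2)
        + ennreal (2 * (\<beta> + \<gamma>)\<^sup>2) * ennreal ((norm (X1 x - X0 x))\<^sup>2) \<partial>M)"
    by (rule nn_integral_mono) (rule pointwise)
  also have "\<dots> = ennreal (2 * \<beta>\<^sup>2) * (\<integral>\<^sup>+x. ennreal ((norm (X0 x - u))\<^sup>2) \<partial>M)
      + ennreal (2 * (\<beta> + \<gamma>)\<^sup>2) * (\<integral>\<^sup>+x. ennreal ((norm (X1 x - X0 x))\<^sup>2) \<partial>M)"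
    by (simp add: nn_integral_add nn_integral_cmult)
  also have "\<dots> \<le> ennreal (2 * \<beta>\<^sup>2) * ennreal ((norm (u - \<mu>))\<^sup>2 + V) + ennreal (2 * (\<beta> + \<gamma>)\<^sup>2) * ennreal L"
    by (intro add_mono mult_left_mono bias_variance lip) auto
  also have "\<dots> = ennreal (2 * \<beta>\<^sup>2 * ((norm (u - \<mu>))\<^sup>2 + V) + 2 * (\<beta> + \<gamma>)\<^sup>2 * L)"
    using \<open>0 \<le> V\<close> \<open>0 \<le> L\<close> by (simp add: ennreal_mult'[symmetric] ennreal_plus[symmetric] del: ennreal_plus)
  finally show ?thesis .
qed

lemma (in prob_space) nn_integral_ennreal_affine:
  assumes [measurable]: "f \<in> borel_measurable M" "h \<in> borel_measurable M"
    and nonneg: "\<And>x. 0 \<le> f x" "\<And>x. 0 \<le> h x" "0 \<le> a" "0 \<le> b" "0 \<le> c"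
  shows "(\<integral>\<^sup>+x. ennreal (a + b * f x + c * h x) \<partial>M)
    = ennreal a + ennreal b * (\<integral>\<^sup>+x. ennreal (f x) \<partial>M) + ennreal c * (\<integral>\<^sup>+x. ennreal (h x) \<partial>M)"
proof -
  have "(\<integral>\<^sup>+x. ennreal (a + b * f x + c * h x) \<partial>M)
      = (\<integral>\<^sup>+x. ennreal a + ennreal b * ennreal (f x) + ennreal c * ennreal (h x) \<partial>M)"
    using nonneg by (intro nn_integral_cong) (simp add: ennreal_mult)
  then show ?thesis
    by (simp add: nn_integral_add nn_integral_cmult emeasure_space_1)
qed

lemma card_subsets_containing:
  assumes "i \<in> A" "finite A" "1 \<le> k"
  shows "card {S. S \<subseteq> A \<and> card S = k \<and> i \<in> S} = (card A - 1) choose (k - 1)"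
proof -
  let ?T = "{T. T \<subseteq> A - {i} \<and> card T = k - 1}"
  have "bij_betw (insert i) ?T {S. S \<subseteq> A \<and> card S = k \<and> i \<in> S}"
  proof (rule bij_betw_byWitness[where f' = "\<lambda>S. S - {i}"])
    show "insert i ` ?T \<subseteq> {S. S \<subseteq> A \<and> card S = k \<and> i \<in> S}"
      using assms by (auto simp: card_insert_if finite_subset)
    show "(\<lambda>S. S - {i}) ` {S. S \<subseteq> A \<and> card S = k \<and> i \<in> S} \<subseteq> ?T"
      using assms by (auto simp: finite_subset)
  qed auto
  then have "card {S. S \<subseteq> A \<and> card S = k \<and> i \<in> S} = card ?T"
    by (simp add: bij_betw_same_card)
  also have "\<dots> = (card A - 1) choose (k - 1)"
    using assms by (simp add: n_subsets)
  finally show ?thesis .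
qed

lemma emeasure_unif_subsets_containing:
  assumes "i < m" "1 \<le> B1" "B1 \<le> m"
  shows "emeasure (measure_pmf (unif_subsets m B1)) {S. i \<in> S} = ennreal (real B1 / real m)"
proof -
  let ?A = "{S. S \<subseteq> {..<m} \<and> card S = B1}"
  have "finite ?A"
    by (rule finite_subset[of _ "Pow {..<m}"]) auto
  moreover have "?A \<noteq> {}"
    using assms by (auto intro!: exI[of _ "{..<B1}"])
  ultimately have "measure (measure_pmf (pmf_of_set ?A)) {S. i \<in> S}
      = real (card (?A \<inter> {S. i \<in> S})) / real (card ?A)"
    by (simp add: measure_pmf_of_set)
  also have "card (?A \<inter> {S. i \<in> S}) = (m - 1) choose (B1 - 1)"
    using card_subsets_containing[of i "{..<m}" B1] assms by (simp add: Int_def)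
  also have "card ?A = m choose B1"
    by (simp add: n_subsets)
  also have "real ((m - 1) choose (B1 - 1)) / real (m choose B1) = real B1 / real m"
    using times_binomial_minus1_eq[of B1 m] assms
    by (simp add: field_simps flip: of_nat_mult)
  finally show ?thesis
    unfolding unif_subsets_def by (simp add: measure_pmf.emeasure_eq_measure)
qed

lemma nn_integral_sampled_component:
  fixes f :: "'a \<Rightarrow> ennreal"
  assumes D: "\<And>j. j \<in> I \<Longrightarrow> prob_space (D j)" and "i \<in> I"
    and [measurable]: "f \<in> borel_measurable (D i)"
  shows "(\<integral>\<^sup>+(S, \<xi>). (if i \<in> S then f (\<xi> i) else 0) \<partial>(measure_pmf Q \<Otimes>\<^sub>M (\<Pi>\<^sub>M j\<in>I. D j)))
    = emeasure (measure_pmf Q) {S. i \<in> S} * (\<integral>\<^sup>+x. f x \<partial>D i)"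
proof -
  interpret PM: prob_space "\<Pi>\<^sub>M j\<in>I. D j"
    using D by (rule prob_space_PiM)
  have component: "(\<integral>\<^sup>+\<xi>. f (\<xi> i) \<partial>(\<Pi>\<^sub>M j\<in>I. D j)) = (\<integral>\<^sup>+x. f x \<partial>D i)"
  proof -
    have "(\<integral>\<^sup>+\<xi>. f (\<xi> i) \<partial>(\<Pi>\<^sub>M j\<in>I. D j)) = (\<integral>\<^sup>+x. f x \<partial>distr (\<Pi>\<^sub>M j\<in>I. D j) (D i) (\<lambda>\<xi>. \<xi> i))"
      using \<open>i \<in> I\<close> by (subst nn_integral_distr) auto
    also have "distr (\<Pi>\<^sub>M j\<in>I. D j) (D i) (\<lambda>\<xi>. \<xi> i) = D i"
      by (rule distr_PiM_component[OF D \<open>i \<in> I\<close>])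
    finally show ?thesis .
  qed
  have "(\<lambda>S. i \<in> S) \<in> measurable (measure_pmf Q) (count_space UNIV)"
    by simp
  then have "(\<lambda>(S, \<xi>). if i \<in> S then f (\<xi> i) else 0)
      \<in> borel_measurable (measure_pmf Q \<Otimes>\<^sub>M (\<Pi>\<^sub>M j\<in>I. D j))"
    using \<open>i \<in> I\<close> unfolding case_prod_beta by measurable
  then have "(\<integral>\<^sup>+(S, \<xi>). (if i \<in> S then f (\<xi> i) else 0) \<partial>(measure_pmf Q \<Otimes>\<^sub>M (\<Pi>\<^sub>M j\<in>I. D j)))
      = (\<integral>\<^sup>+S. \<integral>\<^sup>+\<xi>. (if i \<in> S then f (\<xi> i) else 0) \<partial>(\<Pi>\<^sub>M j\<in>I. D j) \<partial>measure_pmf Q)"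
    by (simp only: PM.nn_integral_fst[symmetric]) simp
  also have "\<dots> = (\<integral>\<^sup>+S. (\<integral>\<^sup>+x. f x \<partial>D i) * indicator {S. i \<in> S} S \<partial>measure_pmf Q)"
    by (intro nn_integral_cong) (simp add: component indicator_def)
  also have "\<dots> = emeasure (measure_pmf Q) {S. i \<in> S} * (\<integral>\<^sup>+x. f x \<partial>D i)"
    by (simp add: nn_integral_cmult_indicator mult.commute)
  finally show ?thesis .
qed

lemma beta_plus_gamma_par_bounds:
  assumes "1 \<le> B1" "B1 \<le> m" "0 \<le> \<beta>" "\<beta> \<le> 1/2"
  shows "0 \<le> \<beta> + gamma_par m B1 \<beta>" "\<beta> + gamma_par m B1 \<beta> \<le> 2 * real m / real B1"
proof -
  define x where "x = (real m - real B1) / real B1"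
  have "0 \<le> x"
    unfolding x_def using assms by simp
  have sum_eq: "\<beta> + gamma_par m B1 \<beta> = x / (1 - \<beta>) + 1"
    unfolding gamma_par_def x_def using assms by (simp add: field_simps)
  then show "0 \<le> \<beta> + gamma_par m B1 \<beta>"
    using \<open>0 \<le> x\<close> assms by simp
  have "x \<le> 2 * x * (1 - \<beta>)"
    using mult_nonneg_nonneg[OF \<open>0 \<le> x\<close>, of "1 - 2 * \<beta>"] assms by (simp add: algebra_simps)
  then have "x / (1 - \<beta>) \<le> 2 * x"
    using assms by (simp add: divide_le_eq)
  moreover have "2 * x + 1 \<le> 2 * real m / real B1"
    unfolding x_def using assms by (simp add: field_simps)
  ultimately show "\<beta> + gamma_par m B1 \<beta> \<le> 2 * real m / real B1"
    unfolding sum_eq by linarith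
qed

lemma sum_u_next_block_bounds_le:
  assumes B1: "1 \<le> B1" "B1 \<le> m" and beta: "0 \<le> \<beta>" "\<beta> \<le> 1/2"
    and "0 \<le> V" "0 \<le> L" "\<And>i. 0 \<le> a i"
  shows "(\<Sum>i<m. real B1 / real m * (2 * \<beta>\<^sup>2 * (a i + V) + 2 * (\<beta> + gamma_par m B1 \<beta>)\<^sup>2 * L))
    \<le> 2 * real B1 * \<beta>\<^sup>2 * V + 4 * real B1 * \<beta>\<^sup>2 / real m * (\<Sum>i<m. a i) + 9 * (real m)\<^sup>2 / real B1 * L"
proof -
  define c where "c = \<beta> + gamma_par m B1 \<beta>"
  have "c\<^sup>2 \<le> (2 * real m / real B1)\<^sup>2"
    unfolding c_def using beta_plus_gamma_par_bounds[OF B1 beta] by (intro power_mono)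
  then have "2 * real B1 * c\<^sup>2 \<le> 2 * real B1 * (2 * real m / real B1)\<^sup>2"
    by (simp add: mult_left_mono)
  also have "\<dots> \<le> 9 * (real m)\<^sup>2 / real B1"
    using assms by (simp add: power2_eq_square field_simps)
  finally have c_bound: "2 * real B1 * c\<^sup>2 \<le> 9 * (real m)\<^sup>2 / real B1" .
  have "(\<Sum>i<m. real B1 / real m * (2 * \<beta>\<^sup>2 * (a i + V) + 2 * c\<^sup>2 * L))
      = 2 * real B1 * \<beta>\<^sup>2 / real m * (\<Sum>i<m. a i) + 2 * real B1 * \<beta>\<^sup>2 * V + 2 * real B1 * c\<^sup>2 * L"
  proof -
    have "(\<Sum>i<m. 2 * \<beta>\<^sup>2 * (a i + V) + 2 * c\<^sup>2 * L)
        = 2 * \<beta>\<^sup>2 * (\<Sum>i<m. a i) + real m * (2 * \<beta>\<^sup>2 * V + 2 * c\<^sup>2 * L)"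
      by (simp add: sum.distrib distrib_left flip: sum_distrib_left)
    moreover have "(\<Sum>i<m. real B1 / real m * (2 * \<beta>\<^sup>2 * (a i + V) + 2 * c\<^sup>2 * L))
        = real B1 / real m * (\<Sum>i<m. 2 * \<beta>\<^sup>2 * (a i + V) + 2 * c\<^sup>2 * L)"
      by (rule sum_distrib_left[symmetric])
    ultimately show ?thesis
      using assms by (simp add: field_simps)
  qed
  also have "\<dots> \<le> 4 * real B1 * \<beta>\<^sup>2 / real m * (\<Sum>i<m. a i) + 2 * real B1 * \<beta>\<^sup>2 * V + 9 * (real m)\<^sup>2 / real B1 * L"
    using assms by (intro add_mono mult_right_mono c_bound) (auto simp: sum_nonneg divide_right_mono)
  finally show ?thesis
    unfolding c_def by simp
qed

lemma borel_measurable_u_next_step_sq: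
  fixes G :: "nat \<Rightarrow> 'd::topological_space \<Rightarrow> 's \<Rightarrow> 'p::{real_normed_vector, second_countable_topology}"
  assumes "i \<in> I" and G: "(\<lambda>(x, \<xi>). G i x \<xi>) \<in> borel_measurable (borel \<Otimes>\<^sub>M D i)"
    and W0: "W0 \<in> borel_measurable N" and W1: "W1 \<in> borel_measurable N"
    and U: "(\<lambda>\<omega>. U \<omega> i) \<in> borel_measurable N"
  shows "(\<lambda>(\<omega>, S, \<xi>). (norm (u_next m B1 \<beta> G S \<xi> (W0 \<omega>) (W1 \<omega>) (U \<omega>) i - U \<omega> i))\<^sup>2)
    \<in> borel_measurable (N \<Otimes>\<^sub>M (measure_pmf Q \<Otimes>\<^sub>M (\<Pi>\<^sub>M j\<in>I. D j)))"
proof -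
  let ?M = "N \<Otimes>\<^sub>M (measure_pmf Q \<Otimes>\<^sub>M (\<Pi>\<^sub>M j\<in>I. D j))"
  have sample: "(\<lambda>p. snd (snd p) i) \<in> measurable ?M (D i)"
    using \<open>i \<in> I\<close> by measurable
  have "(\<lambda>S. i \<in> S) \<in> measurable (measure_pmf Q) (count_space UNIV)"
    by simp
  then have [measurable]: "Measurable.pred ?M (\<lambda>p. i \<in> fst (snd p))"
    by (intro measurable_compose[OF measurable_snd] measurable_compose[OF measurable_fst])
  have oracle_meas: "(\<lambda>p. G i (W (fst p)) (snd (snd p) i)) \<in> borel_measurable ?M"
    if "W \<in> borel_measurable N" for W
    using measurable_compose[OF measurable_Pair[OF measurable_compose[OF measurable_fst that] sample] G]
    by simp
  note [measurable] = oracle_meas[OF W0] oracle_meas[OF W1] measurable_compose[OF measurable_fst U]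
  show ?thesis
    unfolding u_next_def case_prod_unfold by measurable
qed

lemma borel_measurable_u_next_sum_sq:
  fixes G :: "nat \<Rightarrow> 'd::topological_space \<Rightarrow> 's \<Rightarrow> 'p::{real_normed_vector, second_countable_topology}"
  assumes "\<And>i. i < m \<Longrightarrow> (\<lambda>(x, \<xi>). G i x \<xi>) \<in> borel_measurable (borel \<Otimes>\<^sub>M D i)"
    and "W0 \<in> borel_measurable N" "W1 \<in> borel_measurable N"
    and "\<And>i. i < m \<Longrightarrow> (\<lambda>\<omega>. U \<omega> i) \<in> borel_measurable N"
  shows "(\<lambda>(\<omega>, S, \<xi>). ennreal (\<Sum>i<m. (norm (u_next m B1 \<beta> G S \<xi> (W0 \<omega>) (W1 \<omega>) (U \<omega>) i - U \<omega> i))\<^sup>2))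
    \<in> borel_measurable (N \<Otimes>\<^sub>M (measure_pmf Q \<Otimes>\<^sub>M (\<Pi>\<^sub>M i\<in>{..<m}. D i)))"
proof -
  have "(\<lambda>(\<omega>, S, \<xi>). (norm (u_next m B1 \<beta> G S \<xi> (W0 \<omega>) (W1 \<omega>) (U \<omega>) i - U \<omega> i))\<^sup>2)
      \<in> borel_measurable (N \<Otimes>\<^sub>M (measure_pmf Q \<Otimes>\<^sub>M (\<Pi>\<^sub>M i\<in>{..<m}. D i)))" if "i < m" for i
    using that assms by (intro borel_measurable_u_next_step_sq) auto
  then show ?thesis
    unfolding case_prod_unfold by (intro measurable_compose[OF borel_measurable_sum] measurable_ennreal) auto
qed

lemma nn_integral_u_next_block_le:
  fixes G :: "nat \<Rightarrow> 'd \<Rightarrow> 's \<Rightarrow> 'p::{real_inner, banach, second_countable_topology}"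
  assumes i: "i < m" and B1: "1 \<le> B1" "B1 \<le> m" and D_prob: "\<And>j. j < m \<Longrightarrow> prob_space (D j)"
    and [measurable]: "G i w' \<in> borel_measurable (D i)"
    and integrable: "integrable (D i) (G i w)" and mean: "(\<integral>\<xi>. G i w \<xi> \<partial>D i) = \<mu>"
    and variance: "(\<integral>\<^sup>+\<xi>. ennreal ((norm (G i w \<xi> - \<mu>))\<^sup>2) \<partial>D i) \<le> ennreal V"
    and ms_lip: "(\<integral>\<^sup>+\<xi>. ennreal ((norm (G i w' \<xi> - G i w \<xi>))\<^sup>2) \<partial>D i) \<le> ennreal L"
    and "0 \<le> V" "0 \<le> L"
  shows "(\<integral>\<^sup>+(S, \<xi>). ennreal ((norm (u_next m B1 \<beta> G S \<xi> w w' u i - u i))\<^sup>2)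
      \<partial>(measure_pmf (unif_subsets m B1) \<Otimes>\<^sub>M (\<Pi>\<^sub>M j\<in>{..<m}. D j)))
    \<le> ennreal (real B1 / real m
        * (2 * \<beta>\<^sup>2 * ((norm (u i - \<mu>))\<^sup>2 + V) + 2 * (\<beta> + gamma_par m B1 \<beta>)\<^sup>2 * L))"
    (is "_ \<le> ennreal (_ * ?bound)")
proof -
  interpret D: prob_space "D i"
    using D_prob i .
  define h where "h x = ennreal ((norm ((1 - \<beta>) *\<^sub>R u i + \<beta> *\<^sub>R G i w' x
    + gamma_par m B1 \<beta> *\<^sub>R (G i w' x - G i w x) - u i))\<^sup>2)" for x
  have [measurable]: "G i w \<in> borel_measurable (D i)"
    using integrable by (rule borel_measurable_integrable)
  have "(\<integral>\<^sup>+(S, \<xi>). ennreal ((norm (u_next m B1 \<beta> G S \<xi> w w' u i - u i))\<^sup>2)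
        \<partial>(measure_pmf (unif_subsets m B1) \<Otimes>\<^sub>M (\<Pi>\<^sub>M j\<in>{..<m}. D j)))
      = (\<integral>\<^sup>+(S, \<xi>). (if i \<in> S then h (\<xi> i) else 0)
        \<partial>(measure_pmf (unif_subsets m B1) \<Otimes>\<^sub>M (\<Pi>\<^sub>M j\<in>{..<m}. D j)))"
    by (intro nn_integral_cong) (auto simp: u_next_def h_def)
  also have "\<dots> = emeasure (measure_pmf (unif_subsets m B1)) {S. i \<in> S} * (\<integral>\<^sup>+x. h x \<partial>D i)"
    using i D_prob unfolding h_def by (intro nn_integral_sampled_component) auto
  also have "emeasure (measure_pmf (unif_subsets m B1)) {S. i \<in> S} = ennreal (real B1 / real m)"
    using i B1 by (rule emeasure_unif_subsets_containing)
  also have "(\<integral>\<^sup>+x. h x \<partial>D i) \<le> ennreal ?bound"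
    unfolding h_def using \<open>0 \<le> V\<close> \<open>0 \<le> L\<close>
    by (intro D.nn_integral_momentum_step_le integrable mean variance ms_lip) auto
  also have "ennreal (real B1 / real m) * ennreal ?bound = ennreal (real B1 / real m * ?bound)"
    using \<open>0 \<le> V\<close> \<open>0 \<le> L\<close> by (intro ennreal_mult''[symmetric]) simp
  finally show ?thesis
    by (simp add: mult_left_mono)
qed

lemma nn_integral_u_next_le:
  fixes G :: "nat \<Rightarrow> 'd::real_normed_vector \<Rightarrow> 's \<Rightarrow> 'p::{real_inner, banach, second_countable_topology}"
  assumes B1: "1 \<le> B1" "B1 \<le> m" and beta: "0 \<le> \<beta>" "\<beta> \<le> 1/2"
    and D_prob: "\<And>i. i < m \<Longrightarrow> prob_space (D i)"
    and G_meas: "\<And>i. i < m \<Longrightarrow> (\<lambda>(x, \<xi>). G i x \<xi>) \<in> borel_measurable (borel \<Otimes>\<^sub>M D i)"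
    and integrable: "\<And>i. i < m \<Longrightarrow> integrable (D i) (G i w)"
    and mean: "\<And>i. i < m \<Longrightarrow> (\<integral>\<xi>. G i w \<xi> \<partial>D i) = \<mu> i"
    and variance: "\<And>i. i < m \<Longrightarrow>
        (\<integral>\<^sup>+\<xi>. ennreal ((norm (G i w \<xi> - \<mu> i))\<^sup>2) \<partial>D i) \<le> ennreal (\<sigma>\<^sup>2 / real B2)"
    and ms_lip: "\<And>i. i < m \<Longrightarrow>
        (\<integral>\<^sup>+\<xi>. ennreal ((norm (G i w' \<xi> - G i w \<xi>))\<^sup>2) \<partial>D i) \<le> ennreal (Cg\<^sup>2 * (norm (w' - w))\<^sup>2)"
  shows "(\<integral>\<^sup>+(S, \<xi>). ennreal (\<Sum>i<m. (norm (u_next m B1 \<beta> G S \<xi> w w' u i - u i))\<^sup>2)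
      \<partial>(measure_pmf (unif_subsets m B1) \<Otimes>\<^sub>M (\<Pi>\<^sub>M i\<in>{..<m}. D i)))
    \<le> ennreal (2 * real B1 * \<beta>\<^sup>2 * \<sigma>\<^sup>2 / real B2
        + 4 * real B1 * \<beta>\<^sup>2 / real m * (\<Sum>i<m. (norm (u i - \<mu> i))\<^sup>2)
        + 9 * (real m)\<^sup>2 * Cg\<^sup>2 / real B1 * (norm (w' - w))\<^sup>2)"
proof -
  let ?M = "measure_pmf (unif_subsets m B1) \<Otimes>\<^sub>M (\<Pi>\<^sub>M i\<in>{..<m}. D i)"
  let ?step = "\<lambda>i (S, \<xi>). ennreal ((norm (u_next m B1 \<beta> G S \<xi> w w' u i - u i))\<^sup>2)"
  let ?V = "\<sigma>\<^sup>2 / real B2" and ?L = "Cg\<^sup>2 * (norm (w' - w))\<^sup>2"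
  let ?bound = "\<lambda>i. 2 * \<beta>\<^sup>2 * ((norm (u i - \<mu> i))\<^sup>2 + ?V) + 2 * (\<beta> + gamma_par m B1 \<beta>)\<^sup>2 * ?L"
  have step_meas: "?step i \<in> borel_measurable ?M" if "i < m" for i
  proof -
    have "(\<lambda>(_, S, \<xi>). (norm (u_next m B1 \<beta> G S \<xi> w w' u i - u i))\<^sup>2)
        \<in> borel_measurable (count_space UNIV \<Otimes>\<^sub>M ?M)"
      using that by (intro borel_measurable_u_next_step_sq G_meas) auto
    \<comment> \<open>a section of a jointly measurable function whose first factor is a dummy\<close>
    from measurable_Pair2[OF this, of undefined] show ?thesis
      by (simp add: case_prod_unfold)
  qed
  have "(\<integral>\<^sup>+(S, \<xi>). ennreal (\<Sum>i<m. (norm (u_next m B1 \<beta> G S \<xi> w w' u i - u i))\<^sup>2) \<partial>?M)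
      = (\<integral>\<^sup>+p. (\<Sum>i<m. ?step i p) \<partial>?M)"
    by (intro nn_integral_cong) (auto split: prod.splits)
  also have "\<dots> = (\<Sum>i<m. integral\<^sup>N ?M (?step i))"
    using step_meas by (intro nn_integral_sum) auto
  also have "\<dots> \<le> (\<Sum>i<m. ennreal (real B1 / real m * ?bound i))"
  proof (intro sum_mono)
    fix i assume "i \<in> {..<m}"
    then show "integral\<^sup>N ?M (?step i) \<le> ennreal (real B1 / real m * ?bound i)"
      using measurable_Pair2[OF G_meas, of i w']
      by (intro nn_integral_u_next_block_le B1 D_prob integrable mean variance ms_lip) auto
  qed
  also have "\<dots> = ennreal (\<Sum>i<m. real B1 / real m * ?bound i)"
    by simp
  also have "\<dots> \<le> ennreal (2 * real B1 * \<beta>\<^sup>2 * ?V + 4 * real B1 * \<beta>\<^sup>2 / real m * (\<Sum>i<m. (norm (u i - \<mu> i))\<^sup>2)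
      + 9 * (real m)\<^sup>2 / real B1 * ?L)"
    using B1 beta by (intro ennreal_leI sum_u_next_block_bounds_le) auto
  finally show ?thesis
    by (simp add: ac_simps)
qed

theorem lemma6:
  fixes m B1 B2 :: nat
    and \<beta> \<sigma> Cg :: real
    and g :: "nat \<Rightarrow> 'd::euclidean_space \<Rightarrow> 'p::euclidean_space"
    and G :: "nat \<Rightarrow> 'd \<Rightarrow> 's \<Rightarrow> 'p"
    and D :: "nat \<Rightarrow> 's measure"
    and P :: "'o measure"
    and W0 W1 :: "'o \<Rightarrow> 'd"
    and U :: "'o \<Rightarrow> nat \<Rightarrow> 'p"
  assumes m: "1 \<le> m" and B1: "1 \<le> B1" "B1 \<le> m" and B2: "1 \<le> B2"
    and beta: "0 \<le> \<beta>" "\<beta> \<le> 1/2"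
    and lip: "\<And>i. i < m \<Longrightarrow> Cg-lipschitz_on UNIV (g i)"
    and D_prob: "\<And>i. i < m \<Longrightarrow> prob_space (D i)"
    and G_meas: "\<And>i. i < m \<Longrightarrow> (\<lambda>(x, \<xi>). G i x \<xi>) \<in> borel_measurable (borel \<Otimes>\<^sub>M D i)"
    and unbiased_int: "\<And>i x. i < m \<Longrightarrow> integrable (D i) (G i x)"
    and unbiased: "\<And>i x. i < m \<Longrightarrow> (\<integral>\<xi>. G i x \<xi> \<partial>D i) = g i x"
    and variance: "\<And>i x. i < m \<Longrightarrow>
        (\<integral>\<^sup>+\<xi>. ennreal ((norm (G i x \<xi> - g i x))\<^sup>2) \<partial>D i) \<le> ennreal (\<sigma>\<^sup>2 / real B2)"
    and ms_lip: "\<And>i x y. i < m \<Longrightarrow>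
        (\<integral>\<^sup>+\<xi>. ennreal ((norm (G i x \<xi> - G i y \<xi>))\<^sup>2) \<partial>D i) \<le> ennreal (Cg\<^sup>2 * (norm (x - y))\<^sup>2)"
    and P_prob: "prob_space P"
    and W0_meas: "W0 \<in> borel_measurable P"
    and W1_meas: "W1 \<in> borel_measurable P"
    and U_meas: "\<And>i. i < m \<Longrightarrow> (\<lambda>\<omega>. U \<omega> i) \<in> borel_measurable P"
  shows
    "(\<integral>\<^sup>+(\<omega>, S, \<xi>). ennreal (\<Sum>i<m. (norm (u_next m B1 \<beta> G S \<xi> (W0 \<omega>) (W1 \<omega>) (U \<omega>) i - U \<omega> i))\<^sup>2)
        \<partial>(P \<Otimes>\<^sub>M (measure_pmf (unif_subsets m B1) \<Otimes>\<^sub>M (\<Pi>\<^sub>M i\<in>{..<m}. D i))))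
     \<le> ennreal (2 * real B1 * \<beta>\<^sup>2 * \<sigma>\<^sup>2 / real B2)
       + ennreal (4 * real B1 * \<beta>\<^sup>2 / real m)
           * (\<integral>\<^sup>+\<omega>. ennreal (\<Sum>i<m. (norm (U \<omega> i - g i (W0 \<omega>)))\<^sup>2) \<partial>P)
       + ennreal (9 * (real m)\<^sup>2 * Cg\<^sup>2 / real B1)
           * (\<integral>\<^sup>+\<omega>. ennreal ((norm (W1 \<omega> - W0 \<omega>))\<^sup>2) \<partial>P)"
proof -
  let ?Q = "measure_pmf (unif_subsets m B1)" and ?PM = "\<Pi>\<^sub>M i\<in>{..<m}. D i"
  interpret P: prob_space P
    by (rule P_prob)
  interpret QPM: prob_space "?Q \<Otimes>\<^sub>M ?PM"
    using D_prob by (intro prob_space_pair prob_space_measure_pmf prob_space_PiM) auto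
  have "(\<integral>\<^sup>+(\<omega>, S, \<xi>). ennreal (\<Sum>i<m. (norm (u_next m B1 \<beta> G S \<xi> (W0 \<omega>) (W1 \<omega>) (U \<omega>) i - U \<omega> i))\<^sup>2)
        \<partial>(P \<Otimes>\<^sub>M (?Q \<Otimes>\<^sub>M ?PM)))
      = (\<integral>\<^sup>+\<omega>. \<integral>\<^sup>+(S, \<xi>). ennreal (\<Sum>i<m. (norm (u_next m B1 \<beta> G S \<xi> (W0 \<omega>) (W1 \<omega>) (U \<omega>) i - U \<omega> i))\<^sup>2)
        \<partial>(?Q \<Otimes>\<^sub>M ?PM) \<partial>P)"
    using QPM.nn_integral_fst[OF borel_measurable_u_next_sum_sq[OF G_meas W0_meas W1_meas U_meas]]
    by simp
  also have "\<dots> \<le> (\<integral>\<^sup>+\<omega>. ennreal (2 * real B1 * \<beta>\<^sup>2 * \<sigma>\<^sup>2 / real B2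
        + 4 * real B1 * \<beta>\<^sup>2 / real m * (\<Sum>i<m. (norm (U \<omega> i - g i (W0 \<omega>)))\<^sup>2)
        + 9 * (real m)\<^sup>2 * Cg\<^sup>2 / real B1 * (norm (W1 \<omega> - W0 \<omega>))\<^sup>2) \<partial>P)"
    by (intro nn_integral_mono nn_integral_u_next_le B1 beta D_prob G_meas unbiased_int unbiased variance ms_lip)
  also have "\<dots> = ennreal (2 * real B1 * \<beta>\<^sup>2 * \<sigma>\<^sup>2 / real B2)
      + ennreal (4 * real B1 * \<beta>\<^sup>2 / real m) * (\<integral>\<^sup>+\<omega>. ennreal (\<Sum>i<m. (norm (U \<omega> i - g i (W0 \<omega>)))\<^sup>2) \<partial>P)
      + ennreal (9 * (real m)\<^sup>2 * Cg\<^sup>2 / real B1) * (\<integral>\<^sup>+\<omega>. ennreal ((norm (W1 \<omega> - W0 \<omega>))\<^sup>2) \<partial>P)"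
  proof (intro P.nn_integral_ennreal_affine)
    show "(\<lambda>\<omega>. \<Sum>i<m. (norm (U \<omega> i - g i (W0 \<omega>)))\<^sup>2) \<in> borel_measurable P"
    proof (rule borel_measurable_sum)
      fix i assume "i \<in> {..<m}"
      then have [measurable]: "g i \<in> borel_measurable borel" "(\<lambda>\<omega>. U \<omega> i) \<in> borel_measurable P"
        using lipschitz_on_continuous_on[OF lip] U_meas by (auto intro: borel_measurable_continuous_onI)
      show "(\<lambda>\<omega>. (norm (U \<omega> i - g i (W0 \<omega>)))\<^sup>2) \<in> borel_measurable P"
        using W0_meas by measurable
    qed
  qed (use W0_meas W1_meas in \<open>auto simp: sum_nonneg\<close>)
  finally show ?thesis .
qed

end
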